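(* Let $L$ be a Stonean locale and $\nu:L\to\mathbb{R}$ a real normal valuation. Let $\nu_+$ (resp. $\nu_-$) be the supremum of all $a\in L$ such that $\nu$ (resp. $-\nu$) restricted to $\{b\in L:b\le a\}$ takes only nonnegative values. Then: an element $a\in L$ satisfies this condition for $\nu$ (resp. $-\nu$) if and only if $a\le\nu_+$ (resp. $a\le\nu_-$); $\nu_+\vee\nu_-=1$; $\nu_+\wedge\nu_-$ is the largest $a\in L$ such that $\nu$ vanishes on $\{b:b\le a\}$; and the maps $\nu^+(x)=\nu(\nu_+\wedge x)$ and $\nu^-(x)=-\nu(\nu_-\wedge x)$ are positive normal valuations on $L$ with $\nu=\nu^+-\nu^-$. The same statements hold when $\nu:L\to\mathbb{R}$ is a real continuous valuation on a Boolean locale $L$ (a complete Boolean algebra).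
   Context: Frames/locales: a frame is a poset with finite meets and arbitrary joins with binary meets distributing over joins; $\neg x=\sup\{w:w\wedge x=0\}$. Compact open: $a$ with $\bigvee S\ge a\Rightarrow\bigvee F\ge a$ for some finite $F\subset S$. A Stonean locale is coherent (compact opens closed under finite meets including $1$, every element a join of compact opens), regular ($y=\bigvee\{x:\neg x\vee y=1\}$), and extremally disconnected ($\neg x\vee\neg\neg x=1$). A real valuation is $\nu:L\to\mathbb{R}$ with $\nu(0)=0$ and $\nu(x)+\nu(y)=\nu(x\vee y)+\nu(x\wedge y)$; it is continuous if $\nu(\sup I)=\lim_{x\in I}\nu(x)$ for every directed $I$; normal if in addition $\nu(\neg\neg a)=\nu(a)$. A positive valuation takes values in $[0,\infty)$ (and is monotone). *)

theory Defs
  imports Complex_Main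
begin

definition is_frame :: "'a::complete_lattice itself \<Rightarrow> bool" where
  "is_frame _ \<longleftrightarrow> (\<forall>(x::'a) S. inf x (Sup S) = Sup ((inf x) ` S))"

definition pneg :: "'a::complete_lattice \<Rightarrow> 'a" where
  "pneg x = Sup {w. inf w x = bot}"

definition compact_el :: "'a::complete_lattice \<Rightarrow> bool" where
  "compact_el a \<longleftrightarrow> (\<forall>S. a \<le> Sup S \<longrightarrow> (\<exists>F. finite F \<and> F \<subseteq> S \<and> a \<le> Sup F))"

definition coherent :: "'a::complete_lattice itself \<Rightarrow> bool" where
  "coherent _ \<longleftrightarrow> compact_el (top::'a)
     \<and> (\<forall>a b::'a. compact_el a \<longrightarrow> compact_el b \<longrightarrow> compact_el (inf a b))
     \<and> (\<forall>y::'a. y = Sup {x. compact_el x \<and> x \<le> y})"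

definition regular :: "'a::complete_lattice itself \<Rightarrow> bool" where
  "regular _ \<longleftrightarrow> (\<forall>y::'a. y = Sup {x. sup (pneg x) y = top})"

definition extremally_disconnected :: "'a::complete_lattice itself \<Rightarrow> bool" where
  "extremally_disconnected _ \<longleftrightarrow> (\<forall>x::'a. sup (pneg x) (pneg (pneg x)) = top)"

definition stonean :: "'a::complete_lattice itself \<Rightarrow> bool" where
  "stonean T \<longleftrightarrow> is_frame T \<and> coherent T \<and> regular T \<and> extremally_disconnected T"

definition boolean_locale :: "'a::complete_lattice itself \<Rightarrow> bool" where
  "boolean_locale T \<longleftrightarrow> is_frame T \<and> (\<forall>x::'a. sup x (pneg x) = top)"

definition valuation :: "('a::complete_lattice \<Rightarrow> real) \<Rightarrow> bool" where
  "valuation \<nu> \<longleftrightarrow> \<nu> bot = 0 \<and> (\<forall>x y. \<nu> x + \<nu> y = \<nu> (sup x y) + \<nu> (inf x y))"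

definition directed :: "'a::complete_lattice set \<Rightarrow> bool" where
  "directed I \<longleftrightarrow> I \<noteq> {} \<and> (\<forall>x\<in>I. \<forall>y\<in>I. \<exists>z\<in>I. x \<le> z \<and> y \<le> z)"

definition net_tendsto :: "('a::complete_lattice \<Rightarrow> real) \<Rightarrow> 'a set \<Rightarrow> real \<Rightarrow> bool" where
  "net_tendsto \<nu> I l \<longleftrightarrow> (\<forall>e>0. \<exists>x\<in>I. \<forall>y\<in>I. x \<le> y \<longrightarrow> \<bar>\<nu> y - l\<bar> < e)"

definition continuous_valuation :: "('a::complete_lattice \<Rightarrow> real) \<Rightarrow> bool" where
  "continuous_valuation \<nu> \<longleftrightarrow> valuation \<nu> \<and>
     (\<forall>I. directed I \<longrightarrow> net_tendsto \<nu> I (\<nu> (Sup I)))"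

definition normal_valuation :: "('a::complete_lattice \<Rightarrow> real) \<Rightarrow> bool" where
  "normal_valuation \<nu> \<longleftrightarrow> continuous_valuation \<nu> \<and> (\<forall>a. \<nu> (pneg (pneg a)) = \<nu> a)"

definition positive_valuation :: "('a::complete_lattice \<Rightarrow> real) \<Rightarrow> bool" where
  "positive_valuation \<nu> \<longleftrightarrow> valuation \<nu> \<and> (\<forall>x. 0 \<le> \<nu> x) \<and> mono \<nu>"

definition nonneg_below :: "('a::complete_lattice \<Rightarrow> real) \<Rightarrow> 'a \<Rightarrow> bool" where
  "nonneg_below \<nu> a \<longleftrightarrow> (\<forall>b\<le>a. 0 \<le> \<nu> b)"

definition vanish_below :: "('a::complete_lattice \<Rightarrow> real) \<Rightarrow> 'a \<Rightarrow> bool" where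
  "vanish_below \<nu> a \<longleftrightarrow> (\<forall>b\<le>a. \<nu> b = 0)"

definition pos_part_el :: "('a::complete_lattice \<Rightarrow> real) \<Rightarrow> 'a" where
  "pos_part_el \<nu> = Sup {a. nonneg_below \<nu> a}"

definition neg_part_el :: "('a::complete_lattice \<Rightarrow> real) \<Rightarrow> 'a" where
  "neg_part_el \<nu> = Sup {a. nonneg_below (\<lambda>x. - \<nu> x) a}"

definition hahn_conclusions :: "('a::complete_lattice \<Rightarrow> real) \<Rightarrow> bool" where
  "hahn_conclusions \<nu> \<longleftrightarrow>
     (\<forall>a. nonneg_below \<nu> a \<longleftrightarrow> a \<le> pos_part_el \<nu>)
   \<and> (\<forall>a. nonneg_below (\<lambda>x. - \<nu> x) a \<longleftrightarrow> a \<le> neg_part_el \<nu>)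
   \<and> sup (pos_part_el \<nu>) (neg_part_el \<nu>) = top
   \<and> vanish_below \<nu> (inf (pos_part_el \<nu>) (neg_part_el \<nu>))
   \<and> (\<forall>a. vanish_below \<nu> a \<longrightarrow> a \<le> inf (pos_part_el \<nu>) (neg_part_el \<nu>))
   \<and> positive_valuation (\<lambda>x. \<nu> (inf (pos_part_el \<nu>) x))
   \<and> normal_valuation (\<lambda>x. \<nu> (inf (pos_part_el \<nu>) x))
   \<and> positive_valuation (\<lambda>x. - \<nu> (inf (neg_part_el \<nu>) x))
   \<and> normal_valuation (\<lambda>x. - \<nu> (inf (neg_part_el \<nu>) x))
   \<and> (\<forall>x. \<nu> x = \<nu> (inf (pos_part_el \<nu>) x) - (- \<nu> (inf (neg_part_el \<nu>) x)))"

end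

theory Submission
  imports Defs
begin

text \<open>Both settings reduce to one splitting law:
  \<open>\<nu> c = \<nu> (c \<sqinter> a) + \<nu> (c \<sqinter> \<not>a)\<close> for all \<open>a\<close> and \<open>c\<close>.
  In a Boolean locale this is modularity, since \<open>a \<squnion> \<not>a = 1\<close>; on an
  extremally disconnected frame one splits along \<open>\<not>a \<squnion> \<not>\<not>a = 1\<close> and uses
  normality, as \<open>c \<sqinter> a \<le> c \<sqinter> \<not>\<not>a \<le> \<not>\<not>(c \<sqinter> a)\<close>.
  With the splitting law, being nonnegative below an element is preserved by binary
  joins and, by continuity, by directed joins, hence by all joins; so \<open>\<nu>\<^sub>+\<close> is the
  largest such element. For \<open>b \<le> \<not>\<nu>\<^sub>-\<close>, Zorn's lemma gives a maximal
  \<open>u \<le> b\<close> with \<open>\<nu> u \<ge> 0\<close>; then \<open>-\<nu>\<close> is nonnegative below \<open>b \<sqinter> \<not>u\<close>, which is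
  therefore below \<open>\<nu>\<^sub>- \<sqinter> \<not>\<nu>\<^sub>- = 0\<close>, and \<open>\<nu> b = \<nu> u \<ge> 0\<close>. Thus
  \<open>\<not>\<nu>\<^sub>- \<le> \<nu>\<^sub>+\<close>; also \<open>\<not>\<not>\<nu>\<^sub>- \<le> \<nu>\<^sub>-\<close>, because the splitting law makes
  nonnegativity below \<open>a\<close> pass to \<open>\<not>\<not>a\<close>, so extremal disconnectedness gives
  \<open>\<nu>\<^sub>+ \<squnion> \<nu>\<^sub>- = 1\<close>.\<close>

lemma frame_inf_Sup:
  assumes "is_frame TYPE('a::complete_lattice)"
  shows "inf (x::'a) (Sup S) = Sup (inf x ` S)"
  using assms unfolding is_frame_def by blast

lemma frame_inf_sup_distrib:
  assumes "is_frame TYPE('a::complete_lattice)"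
  shows "inf (x::'a) (sup a b) = sup (inf x a) (inf x b)"
  using frame_inf_Sup[OF assms, of x "{a, b}"] by simp

lemma frame_inf_pneg_eq_bot:
  assumes "is_frame TYPE('a::complete_lattice)"
  shows "inf (x::'a) (pneg x) = bot"
proof -
  have "inf x (pneg x) = Sup (inf x ` {w. inf w x = bot})"
    unfolding pneg_def by (rule frame_inf_Sup[OF assms])
  also have "\<dots> = bot"
    by (auto simp: inf_commute intro!: Sup_bot_conv(2)[THEN iffD2])
  finally show ?thesis .
qed

lemma frame_le_pneg_iff:
  assumes "is_frame TYPE('a::complete_lattice)"
  shows "(w::'a) \<le> pneg x \<longleftrightarrow> inf w x = bot"
proof
  assume "w \<le> pneg x"
  then have "inf w x \<le> inf x (pneg x)" by (simp add: le_infI1 le_infI2)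
  then show "inf w x = bot" using frame_inf_pneg_eq_bot[OF assms] by (simp add: bot_unique)
qed (auto simp: pneg_def intro: Sup_upper)

lemma frame_pneg_antimono:
  assumes "is_frame TYPE('a::complete_lattice)" and "(x::'a) \<le> y"
  shows "pneg y \<le> pneg x"
proof -
  have "inf (pneg y) x \<le> inf y (pneg y)" using assms(2) by (simp add: le_infI1 le_infI2)
  then show ?thesis
    using frame_inf_pneg_eq_bot[OF assms(1), of y] frame_le_pneg_iff[OF assms(1)]
    by (simp add: bot_unique)
qed

lemma frame_le_pneg_pneg:
  assumes "is_frame TYPE('a::complete_lattice)"
  shows "(x::'a) \<le> pneg (pneg x)"
  using frame_le_pneg_iff[OF assms] frame_inf_pneg_eq_bot[OF assms, of x] by simp

lemma frame_pneg_pneg_pneg: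
  assumes "is_frame TYPE('a::complete_lattice)"
  shows "pneg (pneg (pneg (x::'a))) = pneg x"
  by (rule antisym) (auto intro: frame_pneg_antimono[OF assms] frame_le_pneg_pneg[OF assms])

lemma frame_pneg_pneg_eqI:
  assumes "is_frame TYPE('a::complete_lattice)" and "(x::'a) \<le> y" and "y \<le> pneg (pneg x)"
  shows "pneg (pneg y) = pneg (pneg x)"
proof (rule antisym)
  show "pneg (pneg y) \<le> pneg (pneg x)"
    using frame_pneg_antimono[OF assms(1) frame_pneg_antimono[OF assms(1,3)]]
    by (simp add: frame_pneg_pneg_pneg[OF assms(1)])
qed (intro frame_pneg_antimono assms)

lemma frame_inf_pneg_pneg_le:
  assumes "is_frame TYPE('a::complete_lattice)"
  shows "inf (c::'a) (pneg (pneg a)) \<le> pneg (pneg (inf c a))"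
proof -
  define w where "w = inf (inf c (pneg (pneg a))) (pneg (inf c a))"
  have "inf w a \<le> inf (inf c a) (pneg (inf c a))"
    unfolding w_def by (simp add: le_infI1 le_infI2)
  then have "w \<le> pneg a"
    using frame_inf_pneg_eq_bot[OF assms] frame_le_pneg_iff[OF assms] by (simp add: bot_unique)
  moreover have "w \<le> pneg (pneg a)" unfolding w_def by (simp add: le_infI1)
  ultimately have "w = bot"
    using frame_inf_pneg_eq_bot[OF assms, of "pneg a"] by (metis bot_unique le_inf_iff)
  then show ?thesis unfolding w_def using frame_le_pneg_iff[OF assms] by blast
qed

lemma directed_image_inf:
  assumes "directed I"
  shows "directed (inf c ` I)"
  unfolding directed_def
proof (intro conjI ballI)
  show "inf c ` I \<noteq> {}" using assms by (simp add: directed_def)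
  fix x y assume "x \<in> inf c ` I" "y \<in> inf c ` I"
  then obtain x0 y0 where xy: "x0 \<in> I" "y0 \<in> I" "x = inf c x0" "y = inf c y0" by auto
  moreover obtain z where "z \<in> I" "x0 \<le> z" "y0 \<le> z"
    using assms xy(1,2) unfolding directed_def by blast
  ultimately show "\<exists>z\<in>inf c ` I. x \<le> z \<and> y \<le> z"
    by (intro bexI[of _ "inf c z"]) (auto intro: le_infI2)
qed

lemma directed_chain:
  assumes "C \<noteq> {}" and "\<forall>x\<in>C. \<forall>y\<in>C. x \<le> y \<or> y \<le> x"
  shows "directed C"
  using assms unfolding directed_def by blast

lemma directed_finite_Sups: "directed (Sup ` {F. finite F \<and> F \<subseteq> S})"
  unfolding directed_def
proof (intro conjI ballI)
  fix x y assume "x \<in> Sup ` {F. finite F \<and> F \<subseteq> S}" "y \<in> Sup ` {F. finite F \<and> F \<subseteq> S}"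
  then obtain F G where "finite F" "F \<subseteq> S" "x = Sup F" "finite G" "G \<subseteq> S" "y = Sup G"
    by auto
  then show "\<exists>z\<in>Sup ` {F. finite F \<and> F \<subseteq> S}. x \<le> z \<and> y \<le> z"
    by (intro bexI[of _ "Sup (F \<union> G)"]) (auto intro: Sup_subset_mono)
qed auto

lemma Sup_finite_Sups: "Sup (Sup ` {F. finite F \<and> F \<subseteq> S}) = (Sup S :: 'a::complete_lattice)"
proof (rule antisym)
  show "Sup S \<le> Sup (Sup ` {F. finite F \<and> F \<subseteq> S})"
  proof (rule Sup_least)
    fix s assume "s \<in> S"
    then have "Sup {s} \<in> Sup ` {F. finite F \<and> F \<subseteq> S}" by blast
    then show "s \<le> Sup (Sup ` {F. finite F \<and> F \<subseteq> S})" by (metis Sup_upper Sup_insert Sup_empty sup_bot_right)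
  qed
qed (rule Sup_least, auto intro: Sup_subset_mono)

lemma net_tendsto_nonneg:
  assumes "net_tendsto f I l" and "\<forall>x\<in>I. 0 \<le> f x"
  shows "0 \<le> (l::real)"
proof (rule ccontr)
  assume "\<not> 0 \<le> l"
  then obtain x where "x \<in> I" "\<bar>f x - l\<bar> < - l"
    using assms(1) unfolding net_tendsto_def by (metis neg_0_less_iff_less not_le order_refl)
  then show False using assms(2) by auto
qed

lemma net_tendsto_uminus:
  assumes "net_tendsto f I l"
  shows "net_tendsto (\<lambda>x. - f x) I (- l)"
  using assms unfolding net_tendsto_def by (simp add: abs_minus_commute)

lemma net_tendsto_image:
  assumes "net_tendsto f (g ` I) l" and "mono g"
  shows "net_tendsto (\<lambda>x. f (g x)) I l"
  unfolding net_tendsto_def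
proof (intro allI impI)
  fix e :: real assume "e > 0"
  then obtain x where "x \<in> I" and x: "\<forall>y\<in>I. g x \<le> g y \<longrightarrow> \<bar>f (g y) - l\<bar> < e"
    using assms(1) unfolding net_tendsto_def by blast
  then show "\<exists>x\<in>I. \<forall>y\<in>I. x \<le> y \<longrightarrow> \<bar>f (g y) - l\<bar> < e"
    using assms(2) by (auto dest: monoD)
qed

lemma valuation_disjoint_sup:
  assumes "valuation \<nu>" and "inf x y = bot"
  shows "\<nu> (sup x y) = \<nu> x + \<nu> y"
  using assms unfolding valuation_def by (metis add.right_neutral)

lemma continuous_valuation_uminus:
  assumes "continuous_valuation \<nu>"
  shows "continuous_valuation (\<lambda>x. - \<nu> x)"
  using assms unfolding continuous_valuation_def valuation_def
  by (auto simp: algebra_simps intro: net_tendsto_uminus)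

lemma continuous_valuation_inf_left:
  assumes "is_frame TYPE('a::complete_lattice)" and "continuous_valuation (\<nu>::'a \<Rightarrow> real)"
  shows "continuous_valuation (\<lambda>x. \<nu> (inf Q x))"
  unfolding continuous_valuation_def valuation_def
proof (intro conjI allI impI)
  show "\<nu> (inf Q bot) = 0" using assms(2) by (simp add: continuous_valuation_def valuation_def)
next
  fix x y
  have "sup (inf Q x) (inf Q y) = inf Q (sup x y)"
    by (simp add: frame_inf_sup_distrib[OF assms(1)])
  moreover have "inf (inf Q x) (inf Q y) = inf Q (inf x y)" by (simp add: inf_aci)
  ultimately show "\<nu> (inf Q x) + \<nu> (inf Q y) = \<nu> (inf Q (sup x y)) + \<nu> (inf Q (inf x y))"
    using assms(2) unfolding continuous_valuation_def valuation_def by metis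
next
  fix I :: "'a set" assume "directed I"
  then have "net_tendsto \<nu> (inf Q ` I) (\<nu> (Sup (inf Q ` I)))"
    using assms(2) directed_image_inf unfolding continuous_valuation_def by blast
  then have "net_tendsto \<nu> (inf Q ` I) (\<nu> (inf Q (Sup I)))"
    by (simp add: frame_inf_Sup[OF assms(1)])
  moreover have "mono (inf Q)" by (intro monoI inf_mono order_refl)
  ultimately show "net_tendsto (\<lambda>x. \<nu> (inf Q x)) I (\<nu> (inf Q (Sup I)))"
    by (rule net_tendsto_image)
qed

lemma valuation_split_complemented:
  assumes "is_frame TYPE('a::complete_lattice)" and "valuation (\<nu>::'a \<Rightarrow> real)"
    and "sup p q = top" and "inf p q = bot"
  shows "\<nu> c = \<nu> (inf c p) + \<nu> (inf c q)"
proof -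
  have "inf (inf c p) (inf c q) \<le> inf p q" by (simp add: le_infI1 le_infI2)
  then have "\<nu> (sup (inf c p) (inf c q)) = \<nu> (inf c p) + \<nu> (inf c q)"
    using assms(2,4) by (simp add: valuation_disjoint_sup bot_unique)
  then show ?thesis using frame_inf_sup_distrib[OF assms(1), of c p q] assms(3) by simp
qed

lemma boolean_valuation_split_pneg:
  assumes "boolean_locale TYPE('a::complete_lattice)" and "valuation (\<nu>::'a \<Rightarrow> real)"
  shows "\<nu> c = \<nu> (inf c a) + \<nu> (inf c (pneg a))"
  using assms frame_inf_pneg_eq_bot
  by (intro valuation_split_complemented) (auto simp: boolean_locale_def)

lemma normal_valuation_split_pneg:
  assumes fr: "is_frame TYPE('a::complete_lattice)" and "extremally_disconnected TYPE('a)"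
    and "normal_valuation (\<nu>::'a \<Rightarrow> real)"
  shows "\<nu> c = \<nu> (inf c a) + \<nu> (inf c (pneg a))"
proof -
  have "valuation \<nu>" using assms(3) by (simp add: normal_valuation_def continuous_valuation_def)
  then have "\<nu> c = \<nu> (inf c (pneg a)) + \<nu> (inf c (pneg (pneg a)))"
    using assms(2) frame_inf_pneg_eq_bot[OF fr]
    by (intro valuation_split_complemented[OF fr]) (auto simp: extremally_disconnected_def)
  moreover have "pneg (pneg (inf c (pneg (pneg a)))) = pneg (pneg (inf c a))"
    using frame_le_pneg_pneg[OF fr, of a] frame_inf_pneg_pneg_le[OF fr]
    by (intro frame_pneg_pneg_eqI[OF fr]) (auto intro: le_infI2)
  then have "\<nu> (inf c (pneg (pneg a))) = \<nu> (inf c a)"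
    using assms(3) unfolding normal_valuation_def by metis
  ultimately show ?thesis by simp
qed

lemma neg_part_el_eq_pos_part_el: "neg_part_el \<nu> = pos_part_el (\<lambda>x. - \<nu> x)"
  unfolding neg_part_el_def pos_part_el_def ..

locale pneg_split_valuation =
  fixes \<nu> :: "'a::complete_lattice \<Rightarrow> real"
  assumes frame: "is_frame TYPE('a)"
    and continuous: "continuous_valuation \<nu>"
    and split_pneg: "\<And>c a. \<nu> c = \<nu> (inf c a) + \<nu> (inf c (pneg a))"
begin

lemma valuation: "valuation \<nu>"
  using continuous by (simp add: continuous_valuation_def)

lemma nonneg_below_sup:
  assumes "nonneg_below \<nu> a" and "nonneg_below \<nu> b"
  shows "nonneg_below \<nu> (sup a b)"
  unfolding nonneg_below_def
proof (intro allI impI)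
  fix c assume "c \<le> sup a b"
  then have "inf c (pneg a) \<le> inf (pneg a) (sup a b)" by (simp add: le_infI1 le_infI2)
  also have "\<dots> \<le> b"
    using frame_inf_pneg_eq_bot[OF frame, of a]
    by (simp add: frame_inf_sup_distrib[OF frame] inf_commute)
  finally have "0 \<le> \<nu> (inf c (pneg a))" using assms(2) by (simp add: nonneg_below_def)
  moreover have "0 \<le> \<nu> (inf c a)" using assms(1) by (simp add: nonneg_below_def)
  ultimately show "0 \<le> \<nu> c" using split_pneg[of c a] by simp
qed

lemma nonneg_below_Sup_directed:
  assumes "directed S" and "\<forall>s\<in>S. nonneg_below \<nu> s"
  shows "nonneg_below \<nu> (Sup S)"
  unfolding nonneg_below_def
proof (intro allI impI)
  fix c assume "c \<le> Sup S"
  then have "c = Sup (inf c ` S)" by (metis frame_inf_Sup[OF frame] inf_absorb1)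
  moreover have "net_tendsto \<nu> (inf c ` S) (\<nu> (Sup (inf c ` S)))"
    using continuous directed_image_inf[OF assms(1)] by (simp add: continuous_valuation_def)
  ultimately show "0 \<le> \<nu> c"
    using assms(2) by (auto simp: nonneg_below_def intro: net_tendsto_nonneg)
qed

lemma nonneg_below_Sup:
  assumes "\<forall>s\<in>S. nonneg_below \<nu> s"
  shows "nonneg_below \<nu> (Sup S)"
proof -
  have "nonneg_below \<nu> (Sup F)" if "finite F" "F \<subseteq> S" for F
    using that assms
  proof (induction F rule: finite_induct)
    case empty
    then show ?case using valuation by (simp add: nonneg_below_def valuation_def bot_unique)
  qed (simp add: nonneg_below_sup)
  then show ?thesis
    using nonneg_below_Sup_directed[OF directed_finite_Sups] by (auto simp: Sup_finite_Sups)
qed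

lemma nonneg_below_iff_le_pos_part_el: "nonneg_below \<nu> a \<longleftrightarrow> a \<le> pos_part_el \<nu>"
proof
  show "nonneg_below \<nu> a \<Longrightarrow> a \<le> pos_part_el \<nu>"
    unfolding pos_part_el_def by (rule Sup_upper) simp
  have "nonneg_below \<nu> (pos_part_el \<nu>)"
    unfolding pos_part_el_def by (rule nonneg_below_Sup) simp
  then show "a \<le> pos_part_el \<nu> \<Longrightarrow> nonneg_below \<nu> a"
    unfolding nonneg_below_def by auto
qed

lemma nonneg_below_pneg_pneg:
  assumes "nonneg_below \<nu> a"
  shows "nonneg_below \<nu> (pneg (pneg a))"
  unfolding nonneg_below_def
proof (intro allI impI)
  fix d assume "d \<le> pneg (pneg a)"
  then have "inf d (pneg a) = bot"
    using frame_le_pneg_iff[OF frame] by blast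
  then have "\<nu> d = \<nu> (inf d a)"
    using split_pneg[of d a] valuation by (simp add: valuation_def)
  then show "0 \<le> \<nu> d" using assms unfolding nonneg_below_def by simp
qed

lemma pneg_split_valuation_uminus: "pneg_split_valuation (\<lambda>x. - \<nu> x)"
proof
  show "- \<nu> c = - \<nu> (inf c a) + - \<nu> (inf c (pneg a))" for c a
    using split_pneg[of c a] by simp
qed (use frame continuous_valuation_uminus[OF continuous] in auto)

lemma exists_maximal_nonneg_below:
  "\<exists>u\<le>b. 0 \<le> \<nu> u \<and> (\<forall>a. u \<le> a \<longrightarrow> a \<le> b \<longrightarrow> 0 \<le> \<nu> a \<longrightarrow> a = u)"
proof -
  let ?U = "{u. u \<le> b \<and> 0 \<le> \<nu> u}"
  have "\<exists>m\<in>?U. \<forall>a\<in>?U. m \<le> a \<longrightarrow> a = m"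
  proof (rule predicate_Zorn)
    show "partial_order_on ?U (relation_of (\<le>) ?U)"
      by (rule partial_order_on_relation_ofI) auto
  next
    fix C assume "C \<in> Chains (relation_of (\<le>) ?U)"
    then have C: "C \<subseteq> ?U" "\<forall>x\<in>C. \<forall>y\<in>C. x \<le> y \<or> y \<le> x"
      unfolding Chains_def relation_of_def by auto
    show "\<exists>u\<in>?U. \<forall>a\<in>C. a \<le> u"
    proof (cases "C = {}")
      case True
      then show ?thesis using valuation by (intro bexI[of _ bot]) (auto simp: valuation_def)
    next
      case False
      then have "net_tendsto \<nu> C (\<nu> (Sup C))"
        using continuous directed_chain[OF False C(2)] by (simp add: continuous_valuation_def)
      then have "0 \<le> \<nu> (Sup C)" using C(1) by (auto intro: net_tendsto_nonneg)
      then show ?thesis using C(1) by (intro bexI[of _ "Sup C"]) (auto intro: Sup_upper Sup_least)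
    qed
  qed
  then show ?thesis by auto
qed

lemma nonpos_below_inf_pneg_maximal:
  assumes "u \<le> b" and "0 \<le> \<nu> u"
    and maximal: "\<And>a. u \<le> a \<Longrightarrow> a \<le> b \<Longrightarrow> 0 \<le> \<nu> a \<Longrightarrow> a = u"
  shows "nonneg_below (\<lambda>x. - \<nu> x) (inf b (pneg u))"
  unfolding nonneg_below_def
proof (intro allI impI)
  fix d assume d: "d \<le> inf b (pneg u)"
  then have du: "inf u d = bot" using frame_le_pneg_iff[OF frame] by (simp add: inf_commute)
  show "0 \<le> - \<nu> d"
  proof (rule ccontr)
    assume "\<not> 0 \<le> - \<nu> d"
    then have "0 \<le> \<nu> (sup u d)"
      using valuation_disjoint_sup[OF valuation du] assms(2) by simp
    then have "sup u d = u" using maximal[of "sup u d"] d assms(1) by simp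
    then have "d = bot" using du by (metis inf.absorb2 sup.absorb_iff1)
    with \<open>\<not> 0 \<le> - \<nu> d\<close> show False using valuation by (simp add: valuation_def)
  qed
qed

lemma nonneg_below_pneg_neg_part_el: "nonneg_below \<nu> (pneg (neg_part_el \<nu>))"
  unfolding nonneg_below_def
proof (intro allI impI)
  fix b assume b: "b \<le> pneg (neg_part_el \<nu>)"
  obtain u where u: "u \<le> b" "0 \<le> \<nu> u"
    and maximal: "\<And>a. u \<le> a \<Longrightarrow> a \<le> b \<Longrightarrow> 0 \<le> \<nu> a \<Longrightarrow> a = u"
    using exists_maximal_nonneg_below[of b] by blast
  have "inf b (pneg u) \<le> neg_part_el \<nu>"
    unfolding neg_part_el_def
    by (rule Sup_upper) (simp add: nonpos_below_inf_pneg_maximal[OF u maximal])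
  moreover have "inf b (pneg u) \<le> pneg (neg_part_el \<nu>)" using b by (simp add: le_infI1)
  ultimately have "inf b (pneg u) = bot"
    using frame_inf_pneg_eq_bot[OF frame] by (metis bot_unique le_inf_iff)
  then have "\<nu> b = \<nu> u"
    using split_pneg[of b u] u(1) valuation by (simp add: valuation_def inf_absorb2)
  then show "0 \<le> \<nu> b" using u(2) by simp
qed

lemma positive_valuation_inf_left:
  assumes "nonneg_below \<nu> Q"
  shows "positive_valuation (\<lambda>x. \<nu> (inf Q x))"
  unfolding positive_valuation_def
proof (intro conjI allI monoI)
  show "valuation (\<lambda>x. \<nu> (inf Q x))"
    using continuous_valuation_inf_left[OF frame continuous]
    by (simp add: continuous_valuation_def)
  show "0 \<le> \<nu> (inf Q x)" for x using assms by (simp add: nonneg_below_def)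
next
  fix x y :: 'a assume "x \<le> y"
  then have "\<nu> (inf Q y) = \<nu> (inf Q x) + \<nu> (inf (inf Q y) (pneg x))"
    using split_pneg[of "inf Q y" x] by (simp add: inf_aci inf_absorb1 le_infI2)
  moreover have "0 \<le> \<nu> (inf (inf Q y) (pneg x))"
    using assms by (simp add: nonneg_below_def le_infI1)
  ultimately show "\<nu> (inf Q x) \<le> \<nu> (inf Q y)" by simp
qed

lemma normal_valuation_inf_left: "normal_valuation (\<lambda>x. \<nu> (inf Q x))"
  unfolding normal_valuation_def
proof (intro conjI allI)
  show "continuous_valuation (\<lambda>x. \<nu> (inf Q x))"
    by (rule continuous_valuation_inf_left[OF frame continuous])
  fix a
  have "inf (inf Q (pneg (pneg a))) a = inf Q a"
    using frame_le_pneg_pneg[OF frame, of a] by (simp add: inf_assoc inf_absorb2)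
  moreover have "inf (inf Q (pneg (pneg a))) (pneg a) = bot"
    using frame_inf_pneg_eq_bot[OF frame, of "pneg a"] by (simp add: inf_aci)
  ultimately show "\<nu> (inf Q (pneg (pneg a))) = \<nu> (inf Q a)"
    using split_pneg[of "inf Q (pneg (pneg a))" a] valuation by (simp add: valuation_def)
qed

lemma hahn_decomposition:
  assumes "extremally_disconnected TYPE('a)"
  shows "hahn_conclusions \<nu>"
proof -
  interpret minus: pneg_split_valuation "\<lambda>x. - \<nu> x" by (rule pneg_split_valuation_uminus)
  define P where "P = pos_part_el \<nu>"
  define N where "N = neg_part_el \<nu>"
  have pos: "nonneg_below \<nu> a \<longleftrightarrow> a \<le> P" for a
    unfolding P_def by (rule nonneg_below_iff_le_pos_part_el)
  have neg: "nonneg_below (\<lambda>x. - \<nu> x) a \<longleftrightarrow> a \<le> N" for a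
    unfolding N_def neg_part_el_eq_pos_part_el by (rule minus.nonneg_below_iff_le_pos_part_el)
  have vanish: "vanish_below \<nu> a \<longleftrightarrow> a \<le> inf P N" for a
  proof -
    have "vanish_below \<nu> a \<longleftrightarrow> nonneg_below \<nu> a \<and> nonneg_below (\<lambda>x. - \<nu> x) a"
      unfolding vanish_below_def nonneg_below_def by force
    then show ?thesis using pos neg by simp
  qed
  have "pneg N \<le> P" "pneg (pneg N) \<le> N"
    using nonneg_below_pneg_neg_part_el pos neg minus.nonneg_below_pneg_pneg
    unfolding N_def by auto
  then have top: "sup P N = top"
    using assms unfolding extremally_disconnected_def by (metis sup_mono top_unique)
  have decomp: "\<nu> x = \<nu> (inf P x) - (- \<nu> (inf N x))" for x
  proof -
    have "\<nu> (inf P x) + \<nu> (inf N x)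
        = \<nu> (sup (inf P x) (inf N x)) + \<nu> (inf (inf P x) (inf N x))"
      using valuation by (simp add: valuation_def)
    moreover have "sup (inf P x) (inf N x) = x"
      using frame_inf_sup_distrib[OF frame, of x P N] top by (simp add: inf_commute)
    moreover have "\<nu> (inf (inf P x) (inf N x)) = 0"
      using vanish[of "inf (inf P x) (inf N x)"] by (simp add: vanish_below_def le_infI1 le_infI2)
    ultimately show ?thesis by simp
  qed
  have "positive_valuation (\<lambda>x. \<nu> (inf P x))" "normal_valuation (\<lambda>x. \<nu> (inf P x))"
    using pos positive_valuation_inf_left normal_valuation_inf_left by blast+
  moreover have "positive_valuation (\<lambda>x. - \<nu> (inf N x))" "normal_valuation (\<lambda>x. - \<nu> (inf N x))"
    using neg minus.positive_valuation_inf_left minus.normal_valuation_inf_left by blast+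
  ultimately show ?thesis
    using pos neg top vanish decomp unfolding hahn_conclusions_def P_def N_def by blast
qed

end

theorem mainTheorem17:
  fixes \<nu> :: "'a::complete_lattice \<Rightarrow> real"
  shows "(stonean TYPE('a) \<and> normal_valuation \<nu> \<longrightarrow> hahn_conclusions \<nu>)
       \<and> (boolean_locale TYPE('a) \<and> continuous_valuation \<nu> \<longrightarrow> hahn_conclusions \<nu>)"
proof (intro conjI impI; elim conjE)
  assume "stonean TYPE('a)" and nv: "normal_valuation \<nu>"
  then have fr: "is_frame TYPE('a)" and ed: "extremally_disconnected TYPE('a)"
    by (simp_all add: stonean_def)
  interpret pneg_split_valuation \<nu>
    using fr nv normal_valuation_split_pneg[OF fr ed nv]
    by unfold_locales (simp_all add: normal_valuation_def)
  show "hahn_conclusions \<nu>" using ed by (rule hahn_decomposition)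
next
  assume bl: "boolean_locale TYPE('a)" and cv: "continuous_valuation \<nu>"
  then have fr: "is_frame TYPE('a)" and ed: "extremally_disconnected TYPE('a)"
    by (simp_all add: boolean_locale_def extremally_disconnected_def)
  interpret pneg_split_valuation \<nu>
    using fr cv boolean_valuation_split_pneg[OF bl]
    by unfold_locales (simp_all add: continuous_valuation_def)
  show "hahn_conclusions \<nu>" using ed by (rule hahn_decomposition)
qed

end
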